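(* For every $f\in H^2(\mathbb{D})$, $$\lim_{|a|\to 1\ \text{or}\ n\to\infty}|\langle f,e_{n,a}\rangle|=0,$$ i.e. for every $\varepsilon>0$ there exist $r<1$ and $N\in\mathbb{N}$ such that $|\langle f,e_{n,a}\rangle|<\varepsilon$ whenever $(n,a)\in\mathbb{N}\times\mathbb{D}$ satisfies $|a|>r$ or $n>N$. (In other words, the complete Szegő dictionary $\{e_{n,a}\}_{(n,a)\in\mathbb{N}\times\mathbb{D}}$ satisfies the boundary vanishing condition.)
   Context: $\mathbb{D}$ is the open unit disc; $H^2(\mathbb{D})$ the Hardy space with inner product $\langle f,g\rangle=\frac{1}{2\pi}\int_0^{2\pi}f(e^{it})\overline{g(e^{it})}\,dt$. For $n\in\mathbb{N}=\{0,1,\dots\}$ and $a\in\mathbb{D}$, $k_{n,a}(z)=\left(\frac{\partial}{\partial\overline{a}}\right)^n\frac{1}{1-\overline{a}z}=\frac{n!\,z^n}{(1-\overline{a}z)^{n+1}}$ and $e_{n,a}=k_{n,a}/\|k_{n,a}\|$. *)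

theory Defs
  imports "HOL-Analysis.Analysis"
begin

definition circle_mean :: "(complex \<Rightarrow> complex) \<Rightarrow> (complex \<Rightarrow> complex) \<Rightarrow> real \<Rightarrow> complex" where
  "circle_mean f g r = (1 / (2 * pi)) *\<^sub>R
     integral {0..2*pi} (\<lambda>t. f (of_real r * exp (\<i> * of_real t)) * cnj (g (of_real r * exp (\<i> * of_real t))))"

definition H2 :: "(complex \<Rightarrow> complex) set" where
  "H2 = {f. f holomorphic_on ball 0 1 \<and>
            bounded ((\<lambda>r. circle_mean f f r) ` {0..<1})}"

text \<open>Inner product of H^2 (equal to the boundary-value integral).\<close>
definition h2_inner :: "(complex \<Rightarrow> complex) \<Rightarrow> (complex \<Rightarrow> complex) \<Rightarrow> complex" where
  "h2_inner f g = Lim (at_left 1) (circle_mean f g)"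

definition h2_norm :: "(complex \<Rightarrow> complex) \<Rightarrow> real" where
  "h2_norm f = sqrt (Re (h2_inner f f))"

definition szego_k :: "nat \<Rightarrow> complex \<Rightarrow> complex \<Rightarrow> complex" where
  "szego_k n a z = of_nat (fact n) * z ^ n / (1 - cnj a * z) ^ (n + 1)"

definition szego_e :: "nat \<Rightarrow> complex \<Rightarrow> complex \<Rightarrow> complex" where
  "szego_e n a z = szego_k n a z / of_real (h2_norm (szego_k n a))"

end

(*
  Work with Taylor coefficients.  For power series f = sum c_j z^j and g = sum d_j z^j on the
  disc, integrating termwise over the circle of radius r < 1 gives the circle mean
  sum c_j conj(d_j) r^(2j); letting r -> 1 yields <f, g> = sum c_j conj(d_j) whenever this
  series converges absolutely, and shows that f in H^2 has square-summable coefficients.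

  The coefficients of k_{n,a} vanish below index n and equal n! (j choose n) conj(a)^(j-n)
  from n on.  Hence ||k_{n,a}||^2 >= sum_m |a|^(2m) = 1/(1-|a|^2), so the coefficients of
  e_{n,a} form a unit vector of l^2 whose first M entries are at most M! 2^M sqrt(1-|a|^2).

  Split <f, e_{n,a}> = sum c_j conj(e_j) at index M.  By Cauchy-Schwarz the tail is at most
  (sum_{j>=M} |c_j|^2)^(1/2), which is small once M is large.  The head vanishes for n > M and
  is otherwise at most M! 2^M (sum_{j<M} |c_j|) sqrt(1-|a|^2), which is small once |a| is
  close to 1.
*)

theory Submission
  imports Defs "HOL-Complex_Analysis.Cauchy_Integral_Formula"
begin

lemma binomial_series_sums:
  fixes w :: "'a::{real_normed_field,banach}"
  assumes "norm w < 1"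
  shows "(\<lambda>m. of_nat ((n + m) choose m) * w ^ m) sums (1 / (1 - w) ^ (n + 1))"
  using assms
proof (induction n arbitrary: w)
  case 0
  then show ?case using geometric_sums[of w] by simp
next
  case (Suc n)
  define \<rho> where "\<rho> = (1 + norm w) / 2"
  have "norm w < \<rho>" "\<rho> < 1"
    using Suc.prems by (auto simp: \<rho>_def)
  then have "norm (of_real \<rho> :: 'a) < 1" "norm w < norm (of_real \<rho> :: 'a)"
    by (smt (verit) norm_ge_zero norm_of_real)+
  then have abs_sum: "summable (\<lambda>k. norm (of_nat ((n + k) choose k) * w ^ k))"
    using Suc.IH sums_summable powser_insidea by metis
  have geom: "summable (\<lambda>k. norm (w ^ k))"
    using Suc.prems by (simp add: summable_geometric norm_power)
  have coeff: "(\<Sum>i\<le>k. of_nat ((n + i) choose i) * w ^ i * w ^ (k - i)) = of_nat ((Suc n + k) choose k) * w ^ k" for k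
  proof -
    have "(\<Sum>i\<le>k. of_nat ((n + i) choose i) * w ^ i * w ^ (k - i)) = of_nat (\<Sum>i\<le>k. (n + i) choose i) * w ^ k"
      by (simp add: sum_distrib_right mult.assoc power_add[symmetric])
    then show ?thesis by (simp add: sum_choose_lower)
  qed
  have "(\<lambda>k. of_nat ((Suc n + k) choose k) * w ^ k) sums
      ((\<Sum>k. of_nat ((n + k) choose k) * w ^ k) * (\<Sum>k. w ^ k))"
    using Cauchy_product_sums[OF abs_sum geom] by (simp only: coeff)
  also have "(\<Sum>k. of_nat ((n + k) choose k) * w ^ k) * (\<Sum>k. w ^ k) = 1 / (1 - w) ^ (Suc n + 1)"
    using Suc.IH[OF Suc.prems] geometric_sums[OF Suc.prems] by (simp add: sums_iff)
  finally show ?case .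
qed

lemma has_integral_exp_int_period:
  fixes m :: int
  shows "((\<lambda>t::real. exp (of_real t * (\<i> * of_int m))) has_integral (if m = 0 then of_real (2 * pi) else 0)) {0..2*pi}"
proof (cases "m = 0")
  case True
  then show ?thesis using has_integral_const_real[of "1::complex" 0 "2*pi"]
    by (simp add: scaleR_conv_of_real)
next
  case False
  define w where "w = \<i> * of_int m"
  have "w \<noteq> 0" using False by (simp add: w_def)
  then have "((\<lambda>z. exp (z * w) / w) has_field_derivative exp (z * w)) (at z)" for z
    by (auto intro!: derivative_eq_intros)
  then have "((\<lambda>t. exp (of_real t * w)) has_integral (exp (of_real (2*pi) * w) / w - exp (of_real 0 * w) / w)) {0..2*pi}"
    by (intro fundamental_theorem_of_calculus) (auto intro: has_vector_derivative_real_field)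
  moreover have "exp (of_real (2*pi) * w) = 1"
    using exp_integer_2pi[of "of_int m"] by (simp add: w_def mult_ac)
  ultimately show ?thesis using False by (simp add: w_def)
qed

lemma circle_monomials_orthogonal:
  "((\<lambda>t::real. exp (\<i> * of_real t) ^ j * cnj (exp (\<i> * of_real t)) ^ k) has_integral
     (if j = k then of_real (2 * pi) else 0)) {0..2*pi}"
proof -
  have "exp (\<i> * of_real t) ^ j * cnj (exp (\<i> * of_real t)) ^ k = exp (of_real t * (\<i> * of_int (int j - int k)))" for t
    by (simp add: exp_cnj exp_of_nat_mult[symmetric] exp_add[symmetric] algebra_simps)
  then show ?thesis using has_integral_exp_int_period[of "int j - int k"] by simp
qed

lemma power_series_uniform_limit_cball:
  fixes c :: "nat \<Rightarrow> complex"
  assumes cf: "\<And>z. norm z < 1 \<Longrightarrow> (\<lambda>j. c j * z ^ j) sums f z" and "r < 1"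
  shows "uniform_limit (cball 0 r) (\<lambda>N z. \<Sum>j<N. c j * z ^ j) f sequentially"
proof -
  have "1 \<le> conv_radius c"
    by (rule conv_radius_geI_ex') (auto intro: sums_summable[OF cf])
  moreover have "ereal r < 1"
    using \<open>r < 1\<close> by simp
  ultimately have "ereal r < conv_radius c"
    by (rule order.strict_trans2[rotated])
  from powser_uniform_limit[OF this, of 0]
  show ?thesis
    by (rule uniform_limit_cong'[THEN iffD1, rotated 2]) (use cf \<open>r < 1\<close> in \<open>auto simp: sums_iff\<close>)
qed

lemma power_series_on_circle:
  fixes c :: "nat \<Rightarrow> complex"
  assumes cf: "\<And>z. norm z < 1 \<Longrightarrow> (\<lambda>j. c j * z ^ j) sums f z" and r: "0 \<le> r" "r < 1"
  shows "uniform_limit {0..2*pi} (\<lambda>N t. \<Sum>j<N. c j * (of_real r * exp (\<i> * of_real t)) ^ j)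
           (\<lambda>t. f (of_real r * exp (\<i> * of_real t))) sequentially"
    and "bounded ((\<lambda>t. f (of_real r * exp (\<i> * of_real t))) ` {0..2*pi})"
proof -
  have "(\<lambda>t. of_real r * exp (\<i> * of_real t)) \<in> {0..2*pi} \<rightarrow> cball 0 r"
    using r by (auto simp: norm_mult)
  with power_series_uniform_limit_cball[OF cf \<open>r < 1\<close>]
  show UL: "uniform_limit {0..2*pi} (\<lambda>N t. \<Sum>j<N. c j * (of_real r * exp (\<i> * of_real t)) ^ j)
      (\<lambda>t. f (of_real r * exp (\<i> * of_real t))) sequentially"
    by (rule uniform_limit_compose')
  have "bounded ((\<lambda>t. \<Sum>j<N. c j * (of_real r * exp (\<i> * of_real t)) ^ j) ` {0..2*pi})" for N
    by (intro compact_imp_bounded compact_continuous_image compact_Icc continuous_intros)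
  then show "bounded ((\<lambda>t. f (of_real r * exp (\<i> * of_real t))) ` {0..2*pi})"
    by (intro uniform_limit_bounded[OF UL] always_eventually) auto
qed

lemma has_integral_circle_polynomial_product:
  fixes c d :: "nat \<Rightarrow> complex"
  shows "((\<lambda>t. (\<Sum>j<N. c j * (of_real r * exp (\<i> * of_real t)) ^ j)
             * cnj (\<Sum>k<N. d k * (of_real r * exp (\<i> * of_real t)) ^ k))
          has_integral of_real (2 * pi) * (\<Sum>j<N. c j * cnj (d j) * of_real (r ^ (2 * j)))) {0..2*pi}"
proof -
  define E where "E = (\<lambda>t::real. exp (\<i> * of_real t))"
  define X where "X j k = c j * cnj (d k) * of_real (r ^ (j + k))" for j k
  have product: "(\<Sum>j<N. c j * (of_real r * E t) ^ j) * cnj (\<Sum>k<N. d k * (of_real r * E t) ^ k)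
      = (\<Sum>j<N. \<Sum>k<N. X j k * (E t ^ j * cnj (E t) ^ k))" for t
    unfolding cnj_sum sum_product X_def
    by (intro sum.cong refl) (simp add: power_mult_distrib power_add mult_ac)
  have diagonal: "(\<Sum>j<N. \<Sum>k<N. X j k * (if j = k then of_real (2 * pi) else 0))
      = of_real (2 * pi) * (\<Sum>j<N. X j j)"
    by (simp add: if_distrib[of "\<lambda>x. _ * x"] sum.delta' sum_distrib_left mult.commute cong: if_cong)
  have "(\<Sum>j<N. X j j) = (\<Sum>j<N. c j * cnj (d j) * of_real (r ^ (2 * j)))"
    by (simp add: X_def mult_2)
  moreover have "((\<lambda>t. \<Sum>j<N. \<Sum>k<N. X j k * (E t ^ j * cnj (E t) ^ k)) has_integral
      (\<Sum>j<N. \<Sum>k<N. X j k * (if j = k then of_real (2 * pi) else 0))) {0..2*pi}"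
    using circle_monomials_orthogonal unfolding E_def
    by (intro has_integral_sum finite_lessThan has_integral_mult_right)
  ultimately have "((\<lambda>t. (\<Sum>j<N. c j * (of_real r * E t) ^ j) * cnj (\<Sum>k<N. d k * (of_real r * E t) ^ k))
      has_integral of_real (2 * pi) * (\<Sum>j<N. c j * cnj (d j) * of_real (r ^ (2 * j)))) {0..2*pi}"
    by (simp only: product diagonal)
  then show ?thesis
    by (simp only: E_def)
qed

lemma circle_mean_power_series:
  fixes c d :: "nat \<Rightarrow> complex"
  assumes cf: "\<And>z. norm z < 1 \<Longrightarrow> (\<lambda>j. c j * z ^ j) sums f z"
    and dg: "\<And>z. norm z < 1 \<Longrightarrow> (\<lambda>j. d j * z ^ j) sums g z"
    and r: "0 \<le> r" "r < 1"
  shows "(\<lambda>j. c j * cnj (d j) * of_real (r ^ (2 * j))) sums circle_mean f g r"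
proof -
  define \<gamma> where "\<gamma> t = of_real r * exp (\<i> * of_real t)" for t
  have "bounded ((\<lambda>t. cnj (g (\<gamma> t))) ` {0..2*pi})"
    using bounded_linear_image[OF power_series_on_circle(2)[OF dg r] bounded_linear_cnj]
    by (simp add: image_image \<gamma>_def)
  then have "uniform_limit {0..2*pi} (\<lambda>N t. (\<Sum>j<N. c j * \<gamma> t ^ j) * cnj (\<Sum>k<N. d k * \<gamma> t ^ k))
      (\<lambda>t. f (\<gamma> t) * cnj (g (\<gamma> t))) sequentially"
    using power_series_on_circle[OF cf r] power_series_on_circle(1)[OF dg r] unfolding \<gamma>_def
    by (intro uniform_lim_mult bounded_linear.uniform_limit[OF bounded_linear_cnj]) auto
  then obtain I J
    where I: "\<And>N. ((\<lambda>t. (\<Sum>j<N. c j * \<gamma> t ^ j) * cnj (\<Sum>k<N. d k * \<gamma> t ^ k)) has_integral I N) {0..2*pi}"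
      and J: "((\<lambda>t. f (\<gamma> t) * cnj (g (\<gamma> t))) has_integral J) {0..2*pi}"
      and IJ: "I \<longlonglongrightarrow> J"
    by (rule uniform_limit_integral[OF _ _ sequentially_bot]) (auto simp: \<gamma>_def intro!: continuous_intros)
  have "I N = of_real (2 * pi) * (\<Sum>j<N. c j * cnj (d j) * of_real (r ^ (2 * j)))" for N
    using has_integral_unique[OF I[unfolded \<gamma>_def] has_integral_circle_polynomial_product] .
  moreover have "circle_mean f g r = J / of_real (2 * pi)"
    using integral_unique[OF J] by (simp add: circle_mean_def \<gamma>_def scaleR_conv_of_real)
  ultimately show ?thesis
    using tendsto_divide[OF IJ tendsto_const, of "of_real (2 * pi)"] by (simp add: sums_def)
qed

lemma h2_inner_power_series:
  fixes c d :: "nat \<Rightarrow> complex"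
  assumes cf: "\<And>z. norm z < 1 \<Longrightarrow> (\<lambda>j. c j * z ^ j) sums f z"
    and dg: "\<And>z. norm z < 1 \<Longrightarrow> (\<lambda>j. d j * z ^ j) sums g z"
    and abs_sum: "summable (\<lambda>j. norm (c j * cnj (d j)))"
  shows "h2_inner f g = (\<Sum>j. c j * cnj (d j))"
proof -
  \<comment> \<open>Abel summation: the circle means form a series in r that converges uniformly on [0, 1].\<close>
  define P where "P r = (\<Sum>j. c j * cnj (d j) * of_real (r ^ (2 * j)))" for r :: real
  have "norm (c j * cnj (d j) * of_real (r ^ (2 * j))) \<le> norm (c j * cnj (d j))" if "r \<in> {0..1}" for j r
  proof -
    have "norm (of_real (r ^ (2 * j)) :: complex) \<le> 1"
      using that by (simp add: norm_power power_le_one)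
    then show ?thesis
      by (simp add: norm_mult mult_left_le del: of_real_power)
  qed
  then have "uniform_limit {0..1} (\<lambda>N r. \<Sum>j<N. c j * cnj (d j) * of_real (r ^ (2 * j))) P sequentially"
    unfolding P_def by (rule Weierstrass_m_test[OF _ abs_sum])
  then have "continuous_on {0..1} P"
    by (rule uniform_limit_theorem[rotated]) (auto intro!: always_eventually continuous_intros)
  then have "(P \<longlongrightarrow> P 1) (at 1 within {0..1})"
    by (simp add: continuous_on_def)
  then have "(P \<longlongrightarrow> P 1) (at_left 1)"
    by (simp add: at_within_Icc_at_left)
  moreover have "eventually (\<lambda>r. P r = circle_mean f g r) (at_left (1::real))"
    using eventually_at_left_real[OF zero_less_one]
    by eventually_elim (use circle_mean_power_series[OF cf dg] in \<open>auto simp: P_def sums_iff\<close>)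
  ultimately have "(circle_mean f g \<longlongrightarrow> P 1) (at_left 1)"
    by (rule Lim_transform_eventually)
  then show ?thesis
    unfolding h2_inner_def P_def by (simp add: tendsto_Lim)
qed

lemma H2_coefficients_square_summable:
  fixes c :: "nat \<Rightarrow> complex"
  assumes cf: "\<And>z. norm z < 1 \<Longrightarrow> (\<lambda>j. c j * z ^ j) sums f z"
    and "f \<in> H2"
  shows "summable (\<lambda>j. norm (c j) ^ 2)"
proof -
  obtain B where B: "\<And>r. r \<in> {0..<1} \<Longrightarrow> norm (circle_mean f f r) \<le> B"
    using \<open>f \<in> H2\<close> unfolding H2_def bounded_iff by blast
  have mean: "(\<lambda>j. norm (c j) ^ 2 * r ^ (2 * j)) sums Re (circle_mean f f r)" if "r \<in> {0..<1}" for r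
  proof -
    have "Re (c j * cnj (c j) * of_real (r ^ (2 * j))) = norm (c j) ^ 2 * r ^ (2 * j)" for j
      by (simp only: complex_norm_square[symmetric] of_real_mult[symmetric] Re_complex_of_real)
    moreover have "(\<lambda>j. Re (c j * cnj (c j) * of_real (r ^ (2 * j)))) sums Re (circle_mean f f r)"
      using that by (intro bounded_linear.sums[OF bounded_linear_Re] circle_mean_power_series[OF cf cf]) auto
    ultimately show ?thesis
      by (simp only:)
  qed
  have "(\<Sum>j<N. norm (c j) ^ 2) \<le> B" for N
  proof (rule tendsto_le[OF trivial_limit_at_left_real tendsto_const])
    show "((\<lambda>r. \<Sum>j<N. norm (c j) ^ 2 * r ^ (2 * j)) \<longlongrightarrow> (\<Sum>j<N. norm (c j) ^ 2)) (at_left 1)"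
      by (auto intro!: tendsto_eq_intros)
    show "\<forall>\<^sub>F r in at_left 1. (\<Sum>j<N. norm (c j) ^ 2 * r ^ (2 * j)) \<le> B"
      using eventually_at_left_real[OF zero_less_one]
    proof eventually_elim
      case (elim r)
      then have "(\<Sum>j<N. norm (c j) ^ 2 * r ^ (2 * j)) \<le> (\<Sum>j. norm (c j) ^ 2 * r ^ (2 * j))"
        using mean[of r] by (intro sum_le_suminf) (auto simp: sums_iff)
      also have "\<dots> = Re (circle_mean f f r)"
        using mean[of r] elim by (simp add: sums_iff)
      also have "\<dots> \<le> B"
        using B[of r] elim complex_Re_le_cmod[of "circle_mean f f r"] by auto
      finally show ?case .
    qed
  qed
  then show ?thesis
    by (intro summableI_nonneg_bounded) auto
qed

lemma Cauchy_Schwarz_suminf: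
  fixes x y :: "nat \<Rightarrow> real"
  assumes x: "summable (\<lambda>j. x j ^ 2)" and y: "summable (\<lambda>j. y j ^ 2)"
  shows "summable (\<lambda>j. \<bar>x j * y j\<bar>)"
    and "(\<Sum>j. \<bar>x j * y j\<bar>) \<le> sqrt (\<Sum>j. x j ^ 2) * sqrt (\<Sum>j. y j ^ 2)"
proof -
  have partial: "(\<Sum>j<N. \<bar>x j * y j\<bar>) \<le> sqrt (\<Sum>j. x j ^ 2) * sqrt (\<Sum>j. y j ^ 2)" for N
  proof -
    have "(\<Sum>j<N. \<bar>x j\<bar> * \<bar>y j\<bar>) \<le> sqrt (\<Sum>j<N. x j ^ 2) * sqrt (\<Sum>j<N. y j ^ 2)"
      using Cauchy_Schwarz_ineq_sum[of "\<lambda>j. \<bar>x j\<bar>" "\<lambda>j. \<bar>y j\<bar>" "{..<N}"]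
      by (simp add: real_le_rsqrt sum_nonneg flip: real_sqrt_mult)
    also have "\<dots> \<le> sqrt (\<Sum>j. x j ^ 2) * sqrt (\<Sum>j. y j ^ 2)"
      using x y by (intro mult_mono real_sqrt_le_mono sum_le_suminf) (auto intro: suminf_nonneg sum_nonneg)
    finally show ?thesis by (simp add: abs_mult)
  qed
  then show "summable (\<lambda>j. \<bar>x j * y j\<bar>)"
    by (intro summableI_nonneg_bounded) auto
  then show "(\<Sum>j. \<bar>x j * y j\<bar>) \<le> sqrt (\<Sum>j. x j ^ 2) * sqrt (\<Sum>j. y j ^ 2)"
    using partial by (rule suminf_le_const)
qed

lemma norm_h2_inner_le_head_tail:
  fixes c d :: "nat \<Rightarrow> complex"
  assumes cf: "\<And>z. norm z < 1 \<Longrightarrow> (\<lambda>j. c j * z ^ j) sums f z"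
    and dg: "\<And>z. norm z < 1 \<Longrightarrow> (\<lambda>j. d j * z ^ j) sums g z"
    and c2: "summable (\<lambda>j. norm (c j) ^ 2)" and d2: "summable (\<lambda>j. norm (d j) ^ 2)"
  shows "norm (h2_inner f g) \<le> (\<Sum>j<M. norm (c j) * norm (d j))
           + sqrt (\<Sum>i. norm (c (i + M)) ^ 2) * sqrt (\<Sum>j. norm (d j) ^ 2)"
proof -
  define p where "p = (\<lambda>j. norm (c j) * norm (d j))"
  have norm_p: "norm (c j * cnj (d j)) = p j" for j
    by (simp add: p_def norm_mult)
  have p: "summable p"
    using Cauchy_Schwarz_suminf(1)[OF c2 d2] by (simp add: p_def abs_mult)
  have c2': "summable (\<lambda>i. norm (c (i + M)) ^ 2)"
    using c2 by (subst summable_iff_shift)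
  have d2': "summable (\<lambda>i. norm (d (i + M)) ^ 2)"
    using d2 by (subst summable_iff_shift)
  have "(\<Sum>i. norm (d (i + M)) ^ 2) \<le> (\<Sum>j. norm (d j) ^ 2)"
    using suminf_split_initial_segment[OF d2, where k = M] by (simp add: sum_nonneg)
  then have "sqrt (\<Sum>i. norm (c (i + M)) ^ 2) * sqrt (\<Sum>i. norm (d (i + M)) ^ 2)
      \<le> sqrt (\<Sum>i. norm (c (i + M)) ^ 2) * sqrt (\<Sum>j. norm (d j) ^ 2)"
    by (intro mult_left_mono real_sqrt_le_mono) (auto intro: suminf_nonneg c2')
  with Cauchy_Schwarz_suminf(2)[OF c2' d2']
  have tail: "(\<Sum>i. p (i + M)) \<le> sqrt (\<Sum>i. norm (c (i + M)) ^ 2) * sqrt (\<Sum>j. norm (d j) ^ 2)"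
    by (simp add: p_def abs_mult)
  have "norm (h2_inner f g) = norm (\<Sum>j. c j * cnj (d j))"
    using p by (simp add: h2_inner_power_series[OF cf dg] norm_p)
  also have "\<dots> \<le> (\<Sum>j. p j)"
    using summable_norm[of "\<lambda>j. c j * cnj (d j)"] p by (simp add: norm_p)
  also have "\<dots> = (\<Sum>j<M. p j) + (\<Sum>i. p (i + M))"
    using suminf_split_initial_segment[OF p, where k = M] by simp
  finally show ?thesis
    using tail by (simp add: p_def)
qed

lemma summable_norm_power2:
  fixes x :: "nat \<Rightarrow> 'a::real_normed_vector"
  assumes "summable (\<lambda>j. norm (x j))"
  shows "summable (\<lambda>j. norm (x j) ^ 2)"
proof -
  have "eventually (\<lambda>j. norm (x j) < 1) sequentially"
    using order_tendstoD(2)[OF summable_LIMSEQ_zero[OF assms] zero_less_one] .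
  then obtain N where small: "\<And>j. j \<ge> N \<Longrightarrow> norm (x j) < 1"
    by (auto simp: eventually_sequentially)
  show ?thesis
  proof (rule summable_comparison_test'[OF assms, of N])
    fix j assume "j \<ge> N"
    then have "norm (x j) * norm (x j) \<le> norm (x j)"
      using small by (intro mult_left_le_one_le) (auto intro: less_imp_le)
    then show "norm (norm (x j) ^ 2) \<le> norm (x j)"
      by (simp add: power2_eq_square)
  qed
qed

(* Taylor coefficients of szego_k n a, read off the binomial series of (1 - conj a * z)^-(n+1). *)
definition szego_coeff :: "nat \<Rightarrow> complex \<Rightarrow> nat \<Rightarrow> complex" where
  "szego_coeff n a j = (if j < n then 0 else of_nat (fact n * (j choose n)) * cnj a ^ (j - n))"

lemma szego_coeff_eq_0 [simp]: "j < n \<Longrightarrow> szego_coeff n a j = 0"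
  by (simp add: szego_coeff_def)

lemma szego_coeff_shift: "szego_coeff n a (m + n) = of_nat (fact n * ((n + m) choose m)) * cnj a ^ m"
  using binomial_symmetric[of n "m + n"] by (simp add: szego_coeff_def add.commute)

lemma norm_szego_coeff:
  "norm (szego_coeff n a j) = (if j < n then 0 else fact n * (j choose n) * norm a ^ (j - n))"
  by (simp add: szego_coeff_def norm_mult norm_power)

lemma szego_k_sums:
  assumes "norm (cnj a * z) < 1"
  shows "(\<lambda>j. szego_coeff n a j * z ^ j) sums szego_k n a z"
proof -
  have "(\<lambda>m. of_nat (fact n) * z ^ n * (of_nat ((n + m) choose m) * (cnj a * z) ^ m)) sums
      (of_nat (fact n) * z ^ n * (1 / (1 - cnj a * z) ^ (n + 1)))"
    by (intro sums_mult binomial_series_sums assms)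
  then have "(\<lambda>m. szego_coeff n a (m + n) * z ^ (m + n)) sums szego_k n a z"
    by (simp add: szego_coeff_shift szego_k_def power_mult_distrib power_add mult_ac)
  then show ?thesis
    by (subst sums_zero_iff_shift[symmetric]) simp_all
qed

lemma summable_norm_szego_coeff:
  assumes "norm a < 1"
  shows "summable (\<lambda>j. norm (szego_coeff n a j))"
proof -
  define \<rho> where "\<rho> = 2 / (1 + norm a)"
  have pos: "0 < 1 + norm a"
    by (simp add: add_pos_nonneg)
  have "norm a * \<rho> < 1" "1 < \<rho>"
    using assms by (simp_all add: \<rho>_def pos_divide_less_eq[OF pos] pos_less_divide_eq[OF pos])
  then have "summable (\<lambda>j. szego_coeff n a j * of_real \<rho> ^ j)"
    by (intro sums_summable[OF szego_k_sums]) (simp add: norm_mult)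
  from powser_insidea[OF this, of 1] \<open>1 < \<rho>\<close>
  show ?thesis by simp
qed

lemma szego_k_sums_disc:
  assumes "norm a < 1" "norm z < 1"
  shows "(\<lambda>j. szego_coeff n a j * z ^ j) sums szego_k n a z"
  using mult_strict_mono[of "norm a" 1 "norm z" 1] assms
  by (intro szego_k_sums) (simp add: norm_mult)

lemma h2_norm_szego_k:
  assumes "norm a < 1"
  shows "h2_norm (szego_k n a) = sqrt (\<Sum>j. norm (szego_coeff n a j) ^ 2)"
proof -
  have square: "szego_coeff n a j * cnj (szego_coeff n a j) = of_real (norm (szego_coeff n a j) ^ 2)" for j
    by (simp only: complex_norm_square)
  have summable: "summable (\<lambda>j. norm (szego_coeff n a j) ^ 2)"
    by (intro summable_norm_power2 summable_norm_szego_coeff assms)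
  have "h2_inner (szego_k n a) (szego_k n a) = (\<Sum>j. szego_coeff n a j * cnj (szego_coeff n a j))"
    using summable szego_k_sums_disc[OF assms]
    by (intro h2_inner_power_series) (auto simp: norm_mult power2_eq_square)
  also have "\<dots> = of_real (\<Sum>j. norm (szego_coeff n a j) ^ 2)"
    by (simp only: square suminf_of_real[OF summable])
  finally show ?thesis
    by (simp add: h2_norm_def)
qed

lemma szego_coeff_square_sum_ge:
  assumes "norm a < 1"
  shows "1 / (1 - norm a ^ 2) \<le> (\<Sum>j. norm (szego_coeff n a j) ^ 2)"
proof -
  have summable: "summable (\<lambda>m. norm (szego_coeff n a (m + n)) ^ 2)"
    using summable_norm_power2[OF summable_norm_szego_coeff[OF assms]]
    by (subst summable_iff_shift)
  have "(norm a ^ 2) ^ m \<le> norm (szego_coeff n a (m + n)) ^ 2" for m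
  proof -
    have "(1::real) \<le> of_nat (fact n * ((n + m) choose m))"
      using nat_less_real_le[of 0 "fact n * ((n + m) choose m)"] by simp
    then have "norm a ^ m \<le> norm (szego_coeff n a (m + n))"
      using mult_right_mono[of 1 _ "norm a ^ m"] by (simp add: szego_coeff_shift norm_mult norm_power)
    then have "(norm a ^ m) ^ 2 \<le> norm (szego_coeff n a (m + n)) ^ 2"
      by (intro power_mono) auto
    then show ?thesis
      by (simp add: power_mult[symmetric] mult.commute)
  qed
  moreover have "(\<lambda>m. (norm a ^ 2) ^ m) sums (1 / (1 - norm a ^ 2))"
    using assms by (intro geometric_sums) (simp add: abs_square_less_1)
  ultimately have "1 / (1 - norm a ^ 2) \<le> (\<Sum>m. norm (szego_coeff n a (m + n)) ^ 2)"
    using summable by (intro sums_le[OF _ _ summable_sums]) auto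
  also have "\<dots> = (\<Sum>j. norm (szego_coeff n a j) ^ 2)"
    using suminf_split_initial_segment[OF summable_norm_power2[OF summable_norm_szego_coeff[OF assms]], where k = n]
    by simp
  finally show ?thesis .
qed

lemma norm_szego_coeff_le:
  assumes "norm a \<le> 1" "j < M"
  shows "norm (szego_coeff n a j) \<le> fact M * 2 ^ M"
proof (cases "j < n")
  case False
  have "fact n \<le> (fact M :: real)"
    using False assms by (intro fact_mono) auto
  moreover have "real (j choose n) \<le> 2 ^ M"
    using binomial_le_pow2[of j n] power_increasing[of j M "2::nat"] assms
    by (metis le_trans less_imp_le of_nat_le_iff of_nat_numeral of_nat_power one_le_numeral)
  moreover have "norm a ^ (j - n) \<le> 1"
    using assms by (intro power_le_one) auto
  ultimately have "fact n * real (j choose n) * norm a ^ (j - n) \<le> fact M * 2 ^ M * 1"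
    by (intro mult_mono) auto
  then show ?thesis
    using False by (simp add: norm_szego_coeff)
qed simp

lemma h2_norm_szego_k_pos:
  assumes "norm a < 1"
  shows "0 < h2_norm (szego_k n a)"
proof -
  have "0 < 1 / (1 - norm a ^ 2)"
    using assms by (simp add: abs_square_less_1)
  also have "\<dots> \<le> (\<Sum>j. norm (szego_coeff n a j) ^ 2)"
    by (rule szego_coeff_square_sum_ge[OF assms])
  finally show ?thesis
    by (simp add: h2_norm_szego_k[OF assms])
qed

lemma inverse_h2_norm_szego_k_le:
  assumes "norm a < 1"
  shows "1 / h2_norm (szego_k n a) \<le> sqrt (1 - norm a ^ 2)"
proof -
  define S where "S = (\<Sum>j. norm (szego_coeff n a j) ^ 2)"
  have "0 < 1 - norm a ^ 2"
    using assms by (simp add: abs_square_less_1)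
  then have "1 \<le> S * (1 - norm a ^ 2)"
    using szego_coeff_square_sum_ge[OF assms, of n] by (simp add: S_def pos_divide_le_eq)
  then have "1 \<le> sqrt (1 - norm a ^ 2) * h2_norm (szego_k n a)"
    by (simp add: h2_norm_szego_k[OF assms] S_def[symmetric] real_sqrt_mult[symmetric] mult.commute)
  then show ?thesis
    using h2_norm_szego_k_pos[OF assms] by (simp add: pos_divide_le_eq)
qed

definition szego_e_coeff :: "nat \<Rightarrow> complex \<Rightarrow> nat \<Rightarrow> complex" where
  "szego_e_coeff n a j = szego_coeff n a j / of_real (h2_norm (szego_k n a))"

lemma szego_e_coeff_eq_0 [simp]: "j < n \<Longrightarrow> szego_e_coeff n a j = 0"
  by (simp add: szego_e_coeff_def)

lemma szego_e_sums:
  assumes "norm a < 1" "norm z < 1"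
  shows "(\<lambda>j. szego_e_coeff n a j * z ^ j) sums szego_e n a z"
  using sums_divide[OF szego_k_sums_disc[OF assms], where c = "of_real (h2_norm (szego_k n a))"]
  by (simp add: szego_e_def szego_e_coeff_def)

lemma szego_e_coeff_square_sums:
  assumes "norm a < 1"
  shows "(\<lambda>j. norm (szego_e_coeff n a j) ^ 2) sums 1"
proof -
  define S where "S = (\<Sum>j. norm (szego_coeff n a j) ^ 2)"
  have "0 < S" "h2_norm (szego_k n a) ^ 2 = S"
    using h2_norm_szego_k_pos[OF assms, of n] h2_norm_szego_k[OF assms, of n] by (auto simp: S_def)
  moreover have "(\<lambda>j. norm (szego_coeff n a j) ^ 2 / S) sums (S / S)"
    unfolding S_def by (intro sums_divide summable_sums summable_norm_power2 summable_norm_szego_coeff assms)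
  ultimately show ?thesis
    by (simp add: szego_e_coeff_def norm_divide power_divide)
qed

lemma szego_e_head_le:
  fixes c :: "nat \<Rightarrow> complex"
  assumes "norm a < 1"
  shows "(\<Sum>j<M. norm (c j) * norm (szego_e_coeff n a j))
           \<le> fact M * 2 ^ M * (\<Sum>j<M. norm (c j)) * sqrt (1 - norm a ^ 2)"
proof -
  have pos: "0 < h2_norm (szego_k n a)"
    by (rule h2_norm_szego_k_pos[OF assms])
  have "(\<Sum>j<M. norm (c j) * norm (szego_e_coeff n a j))
      = (\<Sum>j<M. norm (c j) * norm (szego_coeff n a j)) * (1 / h2_norm (szego_k n a))"
    using pos by (simp add: szego_e_coeff_def norm_divide sum_divide_distrib)
  also have "\<dots> \<le> (\<Sum>j<M. norm (c j) * (fact M * 2 ^ M)) * sqrt (1 - norm a ^ 2)"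
    using assms pos inverse_h2_norm_szego_k_le[OF assms]
    by (intro mult_mono sum_mono mult_left_mono norm_szego_coeff_le) (auto intro: sum_nonneg)
  also have "\<dots> = fact M * 2 ^ M * (\<Sum>j<M. norm (c j)) * sqrt (1 - norm a ^ 2)"
    by (simp add: sum_distrib_left mult_ac)
  finally show ?thesis .
qed

lemma norm_h2_inner_szego_e_le:
  fixes c :: "nat \<Rightarrow> complex"
  assumes cf: "\<And>z. norm z < 1 \<Longrightarrow> (\<lambda>j. c j * z ^ j) sums f z"
    and c2: "summable (\<lambda>j. norm (c j) ^ 2)" and a: "norm a < 1"
  shows "norm (h2_inner f (szego_e n a))
           \<le> (\<Sum>j<M. norm (c j) * norm (szego_e_coeff n a j)) + sqrt (\<Sum>i. norm (c (i + M)) ^ 2)"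
proof -
  have e2: "(\<lambda>j. norm (szego_e_coeff n a j) ^ 2) sums 1"
    by (rule szego_e_coeff_square_sums[OF a])
  from norm_h2_inner_le_head_tail[OF cf szego_e_sums[OF a, where n = n] c2 sums_summable[OF e2], where M = M]
  show ?thesis
    using e2 by (simp add: sums_iff)
qed

lemma H2_power_series:
  assumes "f \<in> H2"
  obtains c where "\<And>z. norm z < 1 \<Longrightarrow> (\<lambda>j. c j * z ^ j) sums f z" and "summable (\<lambda>j. norm (c j) ^ 2)"
proof -
  define c where "c j = (deriv ^^ j) f 0 / fact j" for j
  have cf: "(\<lambda>j. c j * z ^ j) sums f z" if "norm z < 1" for z
    using holomorphic_power_series[of f 0 1 z] assms that by (simp add: H2_def c_def)
  with H2_coefficients_square_summable[OF cf assms] show ?thesis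
    using that by blast
qed

theorem theorem5:
  fixes f :: "complex \<Rightarrow> complex"
  assumes "f \<in> H2"
  shows "\<forall>\<epsilon>>0. \<exists>r<1. \<exists>N::nat. \<forall>n::nat. \<forall>a::complex.
           norm a < 1 \<longrightarrow> (norm a > r \<or> n > N) \<longrightarrow>
           norm (h2_inner f (szego_e n a)) < \<epsilon>"
proof (intro allI impI)
  fix \<epsilon> :: real
  assume "\<epsilon> > 0"
  obtain c where cf: "\<And>z. norm z < 1 \<Longrightarrow> (\<lambda>j. c j * z ^ j) sums f z" and c2: "summable (\<lambda>j. norm (c j) ^ 2)"
    using H2_power_series[OF assms] by blast
  obtain M where "norm (\<Sum>i. norm (c (i + M)) ^ 2) < (\<epsilon> / 2) ^ 2"
    using suminf_exist_split[OF _ c2, of "(\<epsilon> / 2) ^ 2"] \<open>\<epsilon> > 0\<close> by auto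
  then have tail: "sqrt (\<Sum>i. norm (c (i + M)) ^ 2) < \<epsilon> / 2"
    using real_sqrt_less_mono[OF le_less_trans[OF abs_ge_self]] \<open>\<epsilon> > 0\<close> by fastforce
  define A where "A = fact M * 2 ^ M * (\<Sum>j<M. norm (c j))"
  have "((\<lambda>x. A * sqrt (1 - x ^ 2)) \<longlongrightarrow> 0) (at_left 1)"
    by (auto intro!: tendsto_eq_intros)
  then have "eventually (\<lambda>x. A * sqrt (1 - x ^ 2) < \<epsilon> / 2) (at_left 1)"
    using \<open>\<epsilon> > 0\<close> by (intro order_tendstoD(2)) auto
  then obtain r where "r < 1" and head: "\<And>x. r < x \<Longrightarrow> x < 1 \<Longrightarrow> A * sqrt (1 - x ^ 2) < \<epsilon> / 2"
    unfolding eventually_at_left_field by auto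
  have "norm (h2_inner f (szego_e n a)) < \<epsilon>" if a: "norm a < 1" and far: "r < norm a \<or> M < n" for n a
  proof -
    have "(\<Sum>j<M. norm (c j) * norm (szego_e_coeff n a j)) < \<epsilon> / 2"
    proof (cases "M < n")
      case True
      then show ?thesis using \<open>\<epsilon> > 0\<close> by simp
    next
      case False
      then show ?thesis
        using szego_e_head_le[OF a, where M = M and c = c and n = n] head[of "norm a"] far a by (simp add: A_def)
    qed
    then show ?thesis
      using norm_h2_inner_szego_e_le[OF cf c2 a, where n = n and M = M] tail by simp
  qed
  with \<open>r < 1\<close> show "\<exists>r<1. \<exists>N::nat. \<forall>n::nat. \<forall>a::complex. norm a < 1 \<longrightarrow> (norm a > r \<or> n > N) \<longrightarrow>
          norm (h2_inner f (szego_e n a)) < \<epsilon>"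
    by blast
qed

end
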